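(* Let $q\geq3$, $\Delta\geq3$ and $0\leq B<\frac{\Delta-q}{\Delta}$. For the antiferromagnetic $q$-state Potts model with parameter $B$, the global maximum of $\Psi_1$ is not achieved at the translation invariant fixpoint, i.e., not at $\boldsymbol{\alpha}=\boldsymbol{\beta}=(1/q,\dots,1/q)$.
   Context: The Potts model with parameter $B$ has interaction matrix $\mathbf{B}$ with diagonal entries $B$ and off-diagonal entries $1$. $\Psi_1$ is defined on pairs of probability vectors by $\Psi_1(\boldsymbol{\alpha},\boldsymbol{\beta})=\max_{\mathbf{x}}[(\Delta-1)(\sum_i\alpha_i\ln\alpha_i+\sum_j\beta_j\ln\beta_j)+\Delta\sum_{i,j}x_{ij}(\ln B_{ij}-\ln x_{ij})]$ over nonnegative $\mathbf{x}\in\mathbb{R}^{q\times q}$ with row sums $\alpha_i$ and column sums $\beta_j$ (conventions $\ln0=-\infty$, $0\ln0=0$); it is the exponential growth rate of the expected weight of configurations with spin frequencies $\boldsymbol{\alpha},\boldsymbol{\beta}$ on the two sides of a random $\Delta$-regular bipartite graph. The translation invariant fixpoint of the Potts tree recursions $R_i\propto(BC_i+\sum_{j\neq i}C_j)^{\Delta-1}$, $C_j\propto(BR_j+\sum_{i\neq j}R_i)^{\Delta-1}$ is the one with all $R_i$ equal and all $C_j$ equal, corresponding to $\boldsymbol{\alpha}=\boldsymbol{\beta}=(1/q,\dots,1/q)$. *)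

theory Defs
  imports "HOL-Analysis.Analysis" "HOL-Library.Extended_Real"
begin

text \<open>Spins are indexed by {..<q}. Vectors/matrices are functions on nat, only values
 on the index range matter.\<close>

definition prob_vec :: "nat \<Rightarrow> (nat \<Rightarrow> real) \<Rightarrow> bool" where
  "prob_vec q a \<longleftrightarrow> (\<forall>i<q. 0 \<le> a i) \<and> (\<Sum>i<q. a i) = 1"

definition uniform_vec :: "nat \<Rightarrow> nat \<Rightarrow> real" where
  "uniform_vec q = (\<lambda>i. 1 / real q)"

definition potts_B :: "real \<Rightarrow> nat \<Rightarrow> nat \<Rightarrow> real" where
  "potts_B B i j = (if i = j then B else 1)"

definition xlogterm :: "real \<Rightarrow> real \<Rightarrow> ereal" where
  "xlogterm b x = (if x = 0 then 0 else if b = 0 then -\<infinity> else ereal (x * (ln b - ln x)))"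

definition couplings :: "nat \<Rightarrow> (nat \<Rightarrow> real) \<Rightarrow> (nat \<Rightarrow> real) \<Rightarrow> (nat \<Rightarrow> nat \<Rightarrow> real) set" where
  "couplings q a b = {x. (\<forall>i<q. \<forall>j<q. 0 \<le> x i j) \<and> (\<forall>i<q. (\<Sum>j<q. x i j) = a i)
                       \<and> (\<forall>j<q. (\<Sum>i<q. x i j) = b j)}"

text \<open>Psi_1 (entropy terms use 0 ln 0 = 0, which holds for Isabelle's ln since ln 0 = 0).\<close>
definition Psi1 :: "nat \<Rightarrow> nat \<Rightarrow> real \<Rightarrow> (nat \<Rightarrow> real) \<Rightarrow> (nat \<Rightarrow> real) \<Rightarrow> ereal" where
  "Psi1 q \<Delta> B a b =
     (SUP x\<in>couplings q a b.
        ereal ((real \<Delta> - 1) * ((\<Sum>i<q. a i * ln (a i)) + (\<Sum>j<q. b j * ln (b j))))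
        + ereal (real \<Delta>) * (\<Sum>i<q. \<Sum>j<q. xlogterm (potts_B B i j) (x i j)))"

end

theory Submission
  imports Defs
begin

(* At the uniform point, Gibbs' inequality applied term by term bounds Psi_1 by
   -2(Delta-1) ln q + Delta ln(q c), where c = q - 1 + B is the row sum of the interaction
   matrix.  Perturb the marginals to (1 + e u_i)/q and (1 - e u_i)/q for a direction u with
   sum u = 0, and tilt the maximising coupling B_ij/(q c) by the factor 1 + e rho (u_i - u_j),
   rho = c/q, which keeps it a coupling of the new marginals.  To second order in e the two
   entropy terms gain (Delta-1) e^2 |u|^2/q, while the coupling term loses Delta rho e^2 |u|^2/q.
   Since B < (Delta-q)/Delta is equivalent to Delta rho < Delta - 1, the net change is positive
   once the cubic Taylor remainders of (1+t) ln(1+t) are absorbed by taking e small. *)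

lemma abs_mult_ln_one_plus_taylor_le:
  fixes t :: real
  assumes "\<bar>t\<bar> \<le> 1/2"
  shows "\<bar>(1 + t) * ln (1 + t) - t - t^2/2\<bar> \<le> 2 * \<bar>t\<bar>^3"
proof -
  define G where "G s = (1 + s) * ln (1 + s) - s - s^2/2" for s :: real
  have G': "(G has_derivative (*) (ln (1 + s) - s)) (at s within S)" if "0 < 1 + s" for s S
  proof -
    have "1 + s \<noteq> 0"
      using that by linarith
    have "(G has_real_derivative ln (1 + s) - s) (at s within S)"
      unfolding G_def by (rule derivative_eq_intros refl | simp add: that \<open>1 + s \<noteq> 0\<close>)+
    then show ?thesis
      by (simp add: has_field_derivative_def)
  qed
  obtain z where z: "\<bar>z\<bar> \<le> \<bar>t\<bar>" "G t - G 0 = (ln (1 + z) - z) * t"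
  proof (cases "0 \<le> t")
    case True
    have "\<exists>z\<in>{0..t}. G t - G 0 = (ln (1 + z) - z) * (t - 0)"
      using assms by (intro mvt_very_simple[OF True] G') auto
    then obtain z where "z \<in> {0..t}" "G t - G 0 = (ln (1 + z) - z) * t"
      by auto
    then show ?thesis
      using that[of z] by auto
  next
    case False
    have "\<exists>z\<in>{t..0}. G 0 - G t = (ln (1 + z) - z) * (0 - t)"
      using assms False by (intro mvt_very_simple G') auto
    then obtain z where "z \<in> {t..0}" "G t - G 0 = (ln (1 + z) - z) * t"
      by (auto simp: algebra_simps)
    then show ?thesis
      using that[of z] by auto
  qed
  have "\<bar>ln (1 + z) - z\<bar> \<le> 2 * z^2"
    using z(1) assms by (intro abs_ln_one_plus_x_minus_x_bound) auto
  also have "\<dots> \<le> 2 * t^2"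
    using z(1) by (simp add: abs_le_square_iff)
  finally have "\<bar>ln (1 + z) - z\<bar> * \<bar>t\<bar> \<le> 2 * t^2 * \<bar>t\<bar>"
    by (rule mult_right_mono) simp
  then show ?thesis
    using z unfolding G_def by (simp add: abs_mult power3_eq_cube power2_eq_square)
qed

lemma xlogterm_le_gibbs:
  assumes "0 \<le> b" "0 \<le> x" "0 < Z"
  shows "xlogterm b x \<le> ereal (x * ln Z + b / Z - x)"
proof (cases "x = 0 \<or> b = 0")
  case True
  then show ?thesis
    using assms by (auto simp: xlogterm_def)
next
  case False
  then have "0 < x" "0 < b"
    using assms by auto
  then have "x * ln (b / (x * Z)) \<le> x * (b / (x * Z) - 1)"
    using assms by (intro mult_left_mono ln_le_minus_one) auto
  moreover have "x * ln (b / (x * Z)) = x * (ln b - ln x) - x * ln Z"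
    using \<open>0 < x\<close> \<open>0 < b\<close> assms by (simp add: ln_div ln_mult algebra_simps)
  moreover have "x * (b / (x * Z) - 1) = b / Z - x"
    using \<open>0 < x\<close> assms by (simp add: field_simps)
  ultimately show ?thesis
    using False by (simp add: xlogterm_def)
qed

lemma potts_B_nonneg: "0 \<le> B \<Longrightarrow> 0 \<le> potts_B B i j"
  by (simp add: potts_B_def)

lemma sum_potts_B_left:
  assumes "j < q"
  shows "(\<Sum>i<q. potts_B B i j * f i) = (B - 1) * f j + (\<Sum>i<q. f i)"
proof -
  have "(\<Sum>i<q. potts_B B i j * f i) = (\<Sum>i<q. f i + (if i = j then (B - 1) * f j else 0))"
    by (intro sum.cong) (auto simp: potts_B_def algebra_simps)
  then show ?thesis
    using assms by (simp add: sum.distrib)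
qed

lemma sum_potts_B_right:
  "i < q \<Longrightarrow> (\<Sum>j<q. potts_B B i j * f j) = (B - 1) * f i + (\<Sum>j<q. f j)"
  using sum_potts_B_left[of i q B f] by (simp add: potts_B_def eq_commute)

lemma sum_potts_B_zero_diag:
  assumes "\<And>i. f i i = 0"
  shows "(\<Sum>i<q. \<Sum>j<q. potts_B B i j * f i j) = (\<Sum>i<q. \<Sum>j<q. f i j)"
  using assms by (intro sum.cong refl) (auto simp: potts_B_def)

lemma sum_sum_diff_eq_zero:
  fixes u :: "nat \<Rightarrow> real"
  shows "(\<Sum>i<q. \<Sum>j<q. u i - u j) = 0"
  by (simp add: sum_subtractf sum_distrib_left sum.swap[of "\<lambda>i j. u j"])

lemma sum_sum_diff_square:
  fixes u :: "nat \<Rightarrow> real"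
  shows "(\<Sum>i<q. \<Sum>j<q. (u i - u j)^2) = 2 * real q * (\<Sum>i<q. (u i)^2) - 2 * (\<Sum>i<q. u i)^2"
proof -
  have "(\<Sum>i<q. \<Sum>j<q. (u i - u j)^2)
      = (\<Sum>i<q. \<Sum>j<q. (u i)^2) + (\<Sum>i<q. \<Sum>j<q. (u j)^2) - 2 * (\<Sum>i<q. \<Sum>j<q. u i * u j)"
    by (simp add: power2_diff sum.distrib sum_subtractf sum_distrib_left mult.assoc)
  moreover have "(\<Sum>i<q. \<Sum>j<q. u i * u j) = (\<Sum>i<q. u i)^2"
    by (simp add: power2_eq_square sum_product)
  ultimately show ?thesis
    by (simp add: sum_distrib_left mult.assoc)
qed

lemma sum_couplings_eq_one:
  "x \<in> couplings q a b \<Longrightarrow> prob_vec q a \<Longrightarrow> (\<Sum>i<q. \<Sum>j<q. x i j) = 1"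
  by (simp add: couplings_def prob_vec_def)

lemma prob_vec_uniform: "0 < q \<Longrightarrow> prob_vec q (uniform_vec q)"
  by (simp add: prob_vec_def uniform_vec_def)

lemma entropy_uniform:
  "0 < q \<Longrightarrow> (\<Sum>i<q. uniform_vec q i * ln (uniform_vec q i)) = - ln (real q)"
  by (simp add: uniform_vec_def ln_div)

definition tilt :: "nat \<Rightarrow> real \<Rightarrow> (nat \<Rightarrow> real) \<Rightarrow> nat \<Rightarrow> real" where
  "tilt q e u i = (1 + e * u i) / real q"

lemma sum_tilt_numerator:
  fixes u :: "nat \<Rightarrow> real"
  shows "(\<Sum>i<q. u i) = 0 \<Longrightarrow> (\<Sum>i<q. 1 + e * u i) = real q"
  by (simp add: sum.distrib sum_distrib_left[symmetric])

lemma prob_vec_tilt: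
  assumes "0 < q" "(\<Sum>i<q. u i) = 0" "\<And>i. i < q \<Longrightarrow> \<bar>e * u i\<bar> \<le> 1"
  shows "prob_vec q (tilt q e u)"
proof -
  have "0 \<le> 1 + e * u i" if "i < q" for i
    using assms(3)[OF that] by linarith
  then show ?thesis
    using assms(1) sum_tilt_numerator[OF assms(2)]
    by (simp add: prob_vec_def tilt_def sum_divide_distrib[symmetric])
qed

lemma entropy_tilt_ge:
  assumes "0 < q" "(\<Sum>i<q. u i) = 0" "\<And>i. i < q \<Longrightarrow> \<bar>u i\<bar> \<le> 1" "0 \<le> e" "e \<le> 1/2"
  shows "- ln (real q) + (e^2/2 - 2 * e^3) * (\<Sum>i<q. (u i)^2) / real q
           \<le> (\<Sum>i<q. tilt q e u i * ln (tilt q e u i))"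
proof -
  define g where "g i = (1 + e * u i) * ln (1 + e * u i)" for i
  have eu: "\<bar>e * u i\<bar> \<le> 1/2" if "i < q" for i
    using mult_mono[OF assms(5) assms(3)[OF that]] assms(4) by (simp add: abs_mult)
  have "tilt q e u i * ln (tilt q e u i) = (g i - (1 + e * u i) * ln (real q)) / real q"
    if "i < q" for i
    using eu[OF that] assms(1) by (simp add: tilt_def g_def ln_div algebra_simps diff_divide_distrib)
  then have entropy: "(\<Sum>i<q. tilt q e u i * ln (tilt q e u i)) = (\<Sum>i<q. g i) / real q - ln (real q)"
    using assms(1) sum_tilt_numerator[OF assms(2), of e]
    by (simp add: sum_divide_distrib[symmetric] sum_subtractf sum_distrib_right[symmetric]
        diff_divide_distrib)
  have "e * u i + (e^2/2 - 2 * e^3) * (u i)^2 \<le> g i" if "i < q" for i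
  proof -
    have "(u i)^2 * \<bar>u i\<bar> \<le> (u i)^2"
      using assms(3)[OF that] by (intro mult_left_le) auto
    then have "\<bar>u i\<bar>^3 \<le> (u i)^2"
      by (simp add: power3_eq_cube power2_eq_square)
    then have "\<bar>e * u i\<bar>^3 \<le> e^3 * (u i)^2"
      using assms(4) by (simp add: abs_mult power_mult_distrib mult_left_mono)
    then show ?thesis
      using abs_mult_ln_one_plus_taylor_le[OF eu[OF that]]
      by (simp add: g_def algebra_simps)
  qed
  then have "(\<Sum>i<q. e * u i + (e^2/2 - 2 * e^3) * (u i)^2) \<le> (\<Sum>i<q. g i)"
    by (intro sum_mono) auto
  then have "(e^2/2 - 2 * e^3) * (\<Sum>i<q. (u i)^2) \<le> (\<Sum>i<q. g i)"
    using assms(2) by (simp add: sum.distrib sum_distrib_left[symmetric])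
  then show ?thesis
    unfolding entropy using assms(1) by (simp add: divide_right_mono)
qed

locale potts_model =
  fixes q :: nat and B :: real
  assumes q_ge_2: "2 \<le> q" and B_nonneg: "0 \<le> B"
begin

definition c :: real where "c = real q - 1 + B"

definition \<rho> :: real where "\<rho> = c / real q"

lemma q_pos: "0 < q"
  using q_ge_2 by simp

lemma c_pos: "0 < c"
  using q_ge_2 B_nonneg by (simp add: c_def)

lemma rho_ge_half: "1/2 \<le> \<rho>"
  using q_ge_2 B_nonneg by (simp add: \<rho>_def c_def field_simps)

lemma q_mult_rho: "real q * \<rho> = c"
  using q_pos by (simp add: \<rho>_def)

lemma rho_bounds:
  assumes "0 < \<Delta>" "B < (real \<Delta> - real q) / real \<Delta>"
  shows "\<rho> < 1" "real \<Delta> * \<rho> < real \<Delta> - 1"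
proof -
  have "real \<Delta> * B < real \<Delta> - real q"
    using assms by (simp add: field_simps)
  then have "real \<Delta> * B < real \<Delta> * 1"
    by simp
  then have "B < 1"
    using assms(1) by (simp only: mult_less_cancel_left_pos of_nat_0_less_iff)
  then show "\<rho> < 1"
    using q_pos by (simp add: \<rho>_def c_def)
  have "real \<Delta> * c < real q * (real \<Delta> - 1)"
    using \<open>real \<Delta> * B < real \<Delta> - real q\<close> by (simp add: c_def algebra_simps)
  then show "real \<Delta> * \<rho> < real \<Delta> - 1"
    using q_pos by (simp add: \<rho>_def field_simps)
qed

lemma sum_potts_B_row: "i < q \<Longrightarrow> (\<Sum>j<q. potts_B B i j) = c"
  using sum_potts_B_right[of i q B "\<lambda>_. 1"] by (simp add: c_def)

lemma Psi1_le:
  assumes "prob_vec q a"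
  shows "Psi1 q \<Delta> B a b \<le> ereal ((real \<Delta> - 1) * ((\<Sum>i<q. a i * ln (a i)) + (\<Sum>j<q. b j * ln (b j)))
                                   + real \<Delta> * ln (real q * c))"
    (is "_ \<le> ereal (?entropy + _)")
proof -
  define Z where "Z = real q * c"
  have "0 < Z"
    using q_pos c_pos by (simp add: Z_def)
  have objective_le: "(\<Sum>i<q. \<Sum>j<q. xlogterm (potts_B B i j) (x i j)) \<le> ereal (ln Z)"
    if x: "x \<in> couplings q a b" for x
  proof -
    have "(\<Sum>i<q. \<Sum>j<q. xlogterm (potts_B B i j) (x i j))
        \<le> (\<Sum>i<q. \<Sum>j<q. ereal (x i j * ln Z + potts_B B i j / Z - x i j))"
      using x \<open>0 < Z\<close> B_nonneg
      by (intro sum_mono xlogterm_le_gibbs potts_B_nonneg) (auto simp: couplings_def)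
    also have "\<dots> = ereal ((\<Sum>i<q. \<Sum>j<q. x i j) * ln Z + (\<Sum>i<q. \<Sum>j<q. potts_B B i j) / Z
                           - (\<Sum>i<q. \<Sum>j<q. x i j))"
      by (simp add: sum.distrib sum_subtractf sum_distrib_right sum_divide_distrib)
    also have "\<dots> = ereal (ln Z)"
      using sum_couplings_eq_one[OF x assms] q_pos c_pos by (simp add: sum_potts_B_row Z_def)
    finally show ?thesis .
  qed
  have "Psi1 q \<Delta> B a b \<le> ereal ?entropy + ereal (real \<Delta>) * ereal (ln Z)"
    unfolding Psi1_def by (intro SUP_least add_left_mono ereal_mult_left_mono objective_le) auto
  then show ?thesis
    by (simp add: Z_def)
qed

lemma Psi1_uniform_le:
  "Psi1 q \<Delta> B (uniform_vec q) (uniform_vec q)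
     \<le> ereal (- 2 * (real \<Delta> - 1) * ln (real q) + real \<Delta> * ln (real q * c))"
  using Psi1_le[OF prob_vec_uniform[OF q_pos], of \<Delta> "uniform_vec q"] entropy_uniform[OF q_pos]
  by (simp add: algebra_simps)

end

locale potts_tilt = potts_model +
  fixes e :: real and u :: "nat \<Rightarrow> real"
  assumes sum_u: "(\<Sum>i<q. u i) = 0"
    and abs_u_le: "\<And>i. i < q \<Longrightarrow> \<bar>u i\<bar> \<le> 1"
    and e_nonneg: "0 \<le> e"
    and e_rho_le: "e * \<rho> \<le> 1/4"
begin

lemma e_le: "e \<le> 1/2"
  using mult_left_mono[OF rho_ge_half e_nonneg] e_rho_le by linarith

lemma prob_vec_tilt_u: "prob_vec q (tilt q e u)"
  and prob_vec_tilt_neg_u: "prob_vec q (tilt q e (\<lambda>i. - u i))"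
proof -
  have "\<bar>e * u i\<bar> \<le> 1" if "i < q" for i
    using mult_mono[OF e_le abs_u_le[OF that]] e_nonneg by (simp add: abs_mult)
  then show "prob_vec q (tilt q e u)" "prob_vec q (tilt q e (\<lambda>i. - u i))"
    by (auto intro!: prob_vec_tilt q_pos simp: sum_u sum_negf)
qed

definition \<tau> :: "nat \<Rightarrow> nat \<Rightarrow> real" where
  "\<tau> i j = e * \<rho> * (u i - u j)"

text \<open>The maximising coupling \<open>B\<^sub>i\<^sub>j / (q c)\<close> of the uniform problem, tilted so that its
  marginals move to \<open>tilt q e u\<close> and \<open>tilt q e (- u)\<close>; this works because \<open>q \<rho> = c\<close>.\<close>

definition coupling :: "nat \<Rightarrow> nat \<Rightarrow> real" where
  "coupling i j = potts_B B i j * (1 + \<tau> i j) / (real q * c)"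

lemma abs_tau_le:
  assumes "i < q" "j < q"
  shows "\<bar>\<tau> i j\<bar> \<le> 2 * e * \<rho>"
proof -
  have "\<bar>u i - u j\<bar> \<le> 2"
    using abs_u_le[OF assms(1)] abs_u_le[OF assms(2)] by linarith
  then show ?thesis
    using e_nonneg rho_ge_half mult_left_mono[of "\<bar>u i - u j\<bar>" 2 "e * \<rho>"]
    by (simp add: \<tau>_def abs_mult)
qed

lemma one_plus_tau_pos: "i < q \<Longrightarrow> j < q \<Longrightarrow> 0 < 1 + \<tau> i j"
  using abs_tau_le[of i j] e_rho_le by linarith

lemma coupling_row_sum:
  assumes "i < q"
  shows "(\<Sum>j<q. coupling i j) = tilt q e u i"
proof -
  have "(\<Sum>j<q. 1 + \<tau> i j) = (\<Sum>j<q. (1 + e * \<rho> * u i) - e * \<rho> * u j)"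
    by (simp add: \<tau>_def algebra_simps)
  also have "\<dots> = real q * (1 + e * \<rho> * u i) - e * \<rho> * (\<Sum>j<q. u j)"
    by (simp add: sum_subtractf sum_distrib_left)
  also have "\<dots> = real q + c * e * u i"
    using sum_u by (simp add: algebra_simps flip: q_mult_rho)
  finally have "(\<Sum>j<q. potts_B B i j * (1 + \<tau> i j)) = (B - 1) + (real q + c * e * u i)"
    using sum_potts_B_right[OF assms, of B "\<lambda>j. 1 + \<tau> i j"] by (simp add: \<tau>_def)
  also have "\<dots> = c * (1 + e * u i)"
    by (simp add: c_def algebra_simps)
  finally show ?thesis
    using q_pos c_pos by (simp add: coupling_def tilt_def sum_divide_distrib[symmetric])
qed

lemma coupling_col_sum:
  assumes "j < q"
  shows "(\<Sum>i<q. coupling i j) = tilt q e (\<lambda>i. - u i) j"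
proof -
  have "(\<Sum>i<q. 1 + \<tau> i j) = (\<Sum>i<q. (1 - e * \<rho> * u j) + e * \<rho> * u i)"
    by (simp add: \<tau>_def algebra_simps)
  also have "\<dots> = real q * (1 - e * \<rho> * u j) + e * \<rho> * (\<Sum>i<q. u i)"
    by (simp add: sum.distrib sum_distrib_left)
  also have "\<dots> = real q - c * e * u j"
    using sum_u by (simp add: algebra_simps flip: q_mult_rho)
  finally have "(\<Sum>i<q. potts_B B i j * (1 + \<tau> i j)) = (B - 1) + (real q - c * e * u j)"
    using sum_potts_B_left[OF assms, of B "\<lambda>i. 1 + \<tau> i j"] by (simp add: \<tau>_def)
  also have "\<dots> = c * (1 + e * - u j)"
    by (simp add: c_def algebra_simps)
  finally show ?thesis
    using q_pos c_pos by (simp add: coupling_def tilt_def sum_divide_distrib[symmetric])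
qed

lemma coupling_in_couplings: "coupling \<in> couplings q (tilt q e u) (tilt q e (\<lambda>i. - u i))"
proof -
  have "0 \<le> coupling i j" if "i < q" "j < q" for i j
    using B_nonneg q_pos c_pos one_plus_tau_pos[OF that]
    by (simp add: coupling_def potts_B_nonneg)
  then show ?thesis
    by (simp add: couplings_def coupling_row_sum coupling_col_sum)
qed

lemma xlogterm_coupling:
  assumes "i < q" "j < q"
  shows "xlogterm (potts_B B i j) (coupling i j)
           = ereal (coupling i j * ln (real q * c)
                    - potts_B B i j * ((1 + \<tau> i j) * ln (1 + \<tau> i j)) / (real q * c))"
proof (cases "potts_B B i j = 0")
  case True
  then show ?thesis
    by (simp add: xlogterm_def coupling_def)
next
  case False
  then have "0 < potts_B B i j"
    using potts_B_nonneg[OF B_nonneg] by (simp add: order_less_le)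
  have "0 < coupling i j"
    using \<open>0 < potts_B B i j\<close> one_plus_tau_pos[OF assms] q_pos c_pos by (simp add: coupling_def)
  have "ln (potts_B B i j) - ln (coupling i j) = ln (real q * c) - ln (1 + \<tau> i j)"
    using \<open>0 < potts_B B i j\<close> one_plus_tau_pos[OF assms] q_pos c_pos
    by (simp add: coupling_def ln_div ln_mult)
  then have "xlogterm (potts_B B i j) (coupling i j)
      = ereal (coupling i j * (ln (real q * c) - ln (1 + \<tau> i j)))"
    using False \<open>0 < coupling i j\<close> by (simp add: xlogterm_def)
  also have "coupling i j * (ln (real q * c) - ln (1 + \<tau> i j))
      = coupling i j * ln (real q * c) - potts_B B i j * ((1 + \<tau> i j) * ln (1 + \<tau> i j)) / (real q * c)"
    by (simp add: coupling_def right_diff_distrib)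
  finally show ?thesis .
qed

lemma sum_potts_B_one_plus_tau_ln_le:
  "(\<Sum>i<q. \<Sum>j<q. potts_B B i j * ((1 + \<tau> i j) * ln (1 + \<tau> i j)))
     \<le> real q * e^2 * \<rho>^2 * (1 + 8 * e * \<rho>) * (\<Sum>i<q. (u i)^2)"
proof -
  define k where "k = 1/2 + 4 * e * \<rho>"
  have "(1 + \<tau> i j) * ln (1 + \<tau> i j) \<le> \<tau> i j + k * (\<tau> i j)^2" if "i < q" "j < q" for i j
  proof -
    have "\<bar>\<tau> i j\<bar> \<le> 1/2"
      using abs_tau_le[OF that] e_rho_le by linarith
    moreover have "\<bar>\<tau> i j\<bar>^3 \<le> 2 * e * \<rho> * (\<tau> i j)^2"
      using mult_right_mono[OF abs_tau_le[OF that], of "(\<tau> i j)^2"]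
      by (simp add: power3_eq_cube power2_eq_square mult.assoc)
    ultimately show ?thesis
      using abs_mult_ln_one_plus_taylor_le[of "\<tau> i j"] by (simp add: k_def algebra_simps)
  qed
  then have "(\<Sum>i<q. \<Sum>j<q. potts_B B i j * ((1 + \<tau> i j) * ln (1 + \<tau> i j)))
      \<le> (\<Sum>i<q. \<Sum>j<q. potts_B B i j * (\<tau> i j + k * (\<tau> i j)^2))"
    using B_nonneg by (intro sum_mono mult_left_mono potts_B_nonneg) auto
  also have "\<dots> = (\<Sum>i<q. \<Sum>j<q. \<tau> i j) + k * (\<Sum>i<q. \<Sum>j<q. (\<tau> i j)^2)"
    by (subst sum_potts_B_zero_diag) (simp_all add: \<tau>_def sum.distrib sum_distrib_left)
  also have "\<dots> = k * (e * \<rho>)^2 * (2 * real q * (\<Sum>i<q. (u i)^2))"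
    using sum_sum_diff_eq_zero[of u q] sum_sum_diff_square[of u q] sum_u
    by (simp add: \<tau>_def power_mult_distrib sum_distrib_left[symmetric])
  also have "\<dots> = real q * e^2 * \<rho>^2 * (1 + 8 * e * \<rho>) * (\<Sum>i<q. (u i)^2)"
    by (simp add: k_def power2_eq_square algebra_simps)
  finally show ?thesis .
qed

lemma coupling_objective_ge:
  "ereal (ln (real q * c) - e^2 * \<rho> * (1 + 8 * e * \<rho>) * (\<Sum>i<q. (u i)^2) / real q)
     \<le> (\<Sum>i<q. \<Sum>j<q. xlogterm (potts_B B i j) (coupling i j))"
proof -
  define G where "G = (\<Sum>i<q. \<Sum>j<q. potts_B B i j * ((1 + \<tau> i j) * ln (1 + \<tau> i j)))"
  have "G / (real q * c) \<le> real q * e^2 * \<rho>^2 * (1 + 8 * e * \<rho>) * (\<Sum>i<q. (u i)^2) / (real q * c)"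
    unfolding G_def using q_pos c_pos by (intro divide_right_mono sum_potts_B_one_plus_tau_ln_le) simp
  also have "\<dots> = e^2 * \<rho> * (1 + 8 * e * \<rho>) * (\<Sum>i<q. (u i)^2) / real q"
    using q_pos c_pos by (simp add: \<rho>_def power2_eq_square)
  finally have G_le: "G / (real q * c) \<le> e^2 * \<rho> * (1 + 8 * e * \<rho>) * (\<Sum>i<q. (u i)^2) / real q" .
  have "(\<Sum>i<q. \<Sum>j<q. xlogterm (potts_B B i j) (coupling i j))
      = ereal ((\<Sum>i<q. \<Sum>j<q. coupling i j) * ln (real q * c) - G / (real q * c))"
    by (simp add: xlogterm_coupling G_def sum_subtractf sum_distrib_right sum_divide_distrib)
  also have "(\<Sum>i<q. \<Sum>j<q. coupling i j) = 1"
    by (rule sum_couplings_eq_one[OF coupling_in_couplings prob_vec_tilt_u])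
  finally show ?thesis
    using G_le by simp
qed

lemma Psi1_tilt_ge:
  assumes "1 \<le> \<Delta>"
  shows "ereal (- 2 * (real \<Delta> - 1) * ln (real q) + real \<Delta> * ln (real q * c)
            + e^2 * (\<Sum>i<q. (u i)^2) / real q
              * ((real \<Delta> - 1) * (1 - 4 * e) - real \<Delta> * \<rho> * (1 + 8 * e * \<rho>)))
           \<le> Psi1 q \<Delta> B (tilt q e u) (tilt q e (\<lambda>i. - u i))"
    (is "ereal ?gain \<le> _")
proof -
  define S where "S = (\<Sum>i<q. (u i)^2)"
  define H where "H = (\<Sum>i<q. tilt q e u i * ln (tilt q e u i))
                      + (\<Sum>j<q. tilt q e (\<lambda>i. - u i) j * ln (tilt q e (\<lambda>i. - u i) j))"
  define L where "L = ln (real q * c) - e^2 * \<rho> * (1 + 8 * e * \<rho>) * S / real q"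
  have "- ln (real q) + (e^2/2 - 2 * e^3) * S / real q \<le> (\<Sum>i<q. tilt q e u i * ln (tilt q e u i))"
    unfolding S_def by (intro entropy_tilt_ge q_pos sum_u abs_u_le e_nonneg e_le)
  moreover have "- ln (real q) + (e^2/2 - 2 * e^3) * S / real q
      \<le> (\<Sum>j<q. tilt q e (\<lambda>i. - u i) j * ln (tilt q e (\<lambda>i. - u i) j))"
    using entropy_tilt_ge[of q "\<lambda>i. - u i" e] abs_u_le sum_u q_pos e_nonneg e_le
    by (simp add: S_def sum_negf)
  ultimately have "(real \<Delta> - 1) * (- 2 * ln (real q) + (e^2 - 4 * e^3) * S / real q) \<le> (real \<Delta> - 1) * H"
    using assms by (intro mult_left_mono) (auto simp: H_def field_simps)
  moreover have "?gain = (real \<Delta> - 1) * (- 2 * ln (real q) + (e^2 - 4 * e^3) * S / real q) + real \<Delta> * L"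
    using q_pos by (simp add: S_def L_def field_simps power2_eq_square power3_eq_cube)
  ultimately have "ereal ?gain \<le> ereal ((real \<Delta> - 1) * H) + ereal (real \<Delta>) * ereal L"
    by simp
  also have "\<dots> \<le> ereal ((real \<Delta> - 1) * H) + ereal (real \<Delta>) * (\<Sum>i<q. \<Sum>j<q. xlogterm (potts_B B i j) (coupling i j))"
    unfolding L_def S_def by (intro add_left_mono ereal_mult_left_mono coupling_objective_ge) simp
  also have "\<dots> \<le> Psi1 q \<Delta> B (tilt q e u) (tilt q e (\<lambda>i. - u i))"
    unfolding Psi1_def H_def by (rule SUP_upper[OF coupling_in_couplings])
  finally show ?thesis .
qed

lemma Psi1_uniform_less_tilt:
  assumes "1 \<le> \<Delta>" "0 < e" "0 < (\<Sum>i<q. (u i)^2)"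
    and "0 < (real \<Delta> - 1) * (1 - 4 * e) - real \<Delta> * \<rho> * (1 + 8 * e * \<rho>)"
  shows "Psi1 q \<Delta> B (uniform_vec q) (uniform_vec q) < Psi1 q \<Delta> B (tilt q e u) (tilt q e (\<lambda>i. - u i))"
proof -
  have "Psi1 q \<Delta> B (uniform_vec q) (uniform_vec q)
      \<le> ereal (- 2 * (real \<Delta> - 1) * ln (real q) + real \<Delta> * ln (real q * c))"
    by (rule Psi1_uniform_le)
  also have "\<dots> < ereal (- 2 * (real \<Delta> - 1) * ln (real q) + real \<Delta> * ln (real q * c)
      + e^2 * (\<Sum>i<q. (u i)^2) / real q
        * ((real \<Delta> - 1) * (1 - 4 * e) - real \<Delta> * \<rho> * (1 + 8 * e * \<rho>)))"
    using assms q_pos by simp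
  also have "\<dots> \<le> Psi1 q \<Delta> B (tilt q e u) (tilt q e (\<lambda>i. - u i))"
    using assms(1) by (rule Psi1_tilt_ge)
  finally show ?thesis .
qed

end

lemma exists_balanced_direction:
  assumes "2 \<le> q"
  obtains u :: "nat \<Rightarrow> real"
  where "(\<Sum>i<q. u i) = 0" "\<And>i. i < q \<Longrightarrow> \<bar>u i\<bar> \<le> 1" "0 < (\<Sum>i<q. (u i)^2)"
proof
  define u :: "nat \<Rightarrow> real" where "u i = of_bool (i = 0) - of_bool (i = 1)" for i
  show "(\<Sum>i<q. u i) = 0"
    using assms by (simp add: u_def sum_subtractf)
  show "\<bar>u i\<bar> \<le> 1" for i
    by (simp add: u_def)
  show "0 < (\<Sum>i<q. (u i)^2)"
    using assms by (intro sum_pos2[of _ 0]) (auto simp: u_def)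
qed

lemma small_tilt_gain_pos:
  fixes D \<rho> :: real
  assumes "1 \<le> D" "0 \<le> \<rho>" "\<rho> < 1" "D * \<rho> < D - 1"
  defines "e \<equiv> (D - 1 - D * \<rho>) / (24 * D)"
  shows "0 < e" "e * \<rho> \<le> 1/4" "0 < (D - 1) * (1 - 4 * e) - D * \<rho> * (1 + 8 * e * \<rho>)"
proof -
  define \<gamma> where "\<gamma> = D - 1 - D * \<rho>"
  have "0 \<le> D * \<rho>"
    using assms(1,2) by simp
  then have "0 < \<gamma>" "\<gamma> < D"
    using assms(4) by (auto simp: \<gamma>_def)
  moreover have e_eq: "e = \<gamma> / (24 * D)"
    by (simp add: e_def \<gamma>_def)
  ultimately have "0 < e" "e \<le> 1/24"
    using assms(1) unfolding e_eq by (simp_all add: field_simps)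
  then show "0 < e" "e * \<rho> \<le> 1/4"
    using mult_mono[of e "1/24" \<rho> 1] assms(2,3) by auto
  have "\<rho>^2 \<le> 1"
    using assms(2,3) by (simp add: power_le_one)
  then have "D * \<rho>^2 \<le> D"
    using mult_left_mono[of "\<rho>^2" 1 D] assms(1) by simp
  then have "4 * (D - 1) + 8 * D * \<rho>^2 \<le> 12 * D"
    by simp
  then have "e * (4 * (D - 1) + 8 * D * \<rho>^2) \<le> e * (12 * D)"
    using \<open>0 < e\<close> by (intro mult_left_mono) auto
  also have "\<dots> = \<gamma> / 2"
    using assms(1) by (simp add: e_eq)
  finally show "0 < (D - 1) * (1 - 4 * e) - D * \<rho> * (1 + 8 * e * \<rho>)"
    using \<open>0 < \<gamma>\<close> by (simp add: \<gamma>_def power2_eq_square algebra_simps)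
qed

theorem lemma27:
  fixes q \<Delta> :: nat and B :: real
  assumes "q \<ge> 3" and "\<Delta> \<ge> 3" and "0 \<le> B" and "B < (real \<Delta> - real q) / real \<Delta>"
  shows "\<exists>a b. prob_vec q a \<and> prob_vec q b \<and>
           Psi1 q \<Delta> B (uniform_vec q) (uniform_vec q) < Psi1 q \<Delta> B a b"
proof -
  interpret potts_model q B
    using assms by unfold_locales auto
  have "\<rho> < 1" "real \<Delta> * \<rho> < real \<Delta> - 1"
    using rho_bounds[of \<Delta>] assms(2,4) by auto
  define e where "e = (real \<Delta> - 1 - real \<Delta> * \<rho>) / (24 * real \<Delta>)"
  have e: "0 < e" "e * \<rho> \<le> 1/4" "0 < (real \<Delta> - 1) * (1 - 4 * e) - real \<Delta> * \<rho> * (1 + 8 * e * \<rho>)"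
    unfolding e_def using small_tilt_gain_pos[of "real \<Delta>" \<rho>] assms(2) rho_ge_half
      \<open>\<rho> < 1\<close> \<open>real \<Delta> * \<rho> < real \<Delta> - 1\<close> by auto
  obtain u :: "nat \<Rightarrow> real"
    where u: "(\<Sum>i<q. u i) = 0" "\<And>i. i < q \<Longrightarrow> \<bar>u i\<bar> \<le> 1" "0 < (\<Sum>i<q. (u i)^2)"
    using exists_balanced_direction[OF q_ge_2] by blast
  interpret potts_tilt q B e u
    using u e by unfold_locales auto
  show ?thesis
    using Psi1_uniform_less_tilt[of \<Delta>] assms(2) e u prob_vec_tilt_u prob_vec_tilt_neg_u by auto
qed

end
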